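(* Let $n\ge1$ and let $\mathcal{T}:\mathrm{Cvx}(\mathbb{R}^n)\to\mathrm{Cvx}(\mathbb{R}^n)$ satisfy: (1) for all $\phi,\psi\in\mathrm{Cvx}(\mathbb{R}^n)$, $\phi\le\psi$ if and only if $\mathcal{T}\phi\le\mathcal{T}\psi$; (2) if $\phi\in\mathrm{Cvx}(\mathbb{R}^n)$ is positively homogeneous (i.e. $\phi(\lambda x)=\lambda\phi(x)$ for all $x$ and all $\lambda>0$), then $\mathcal{T}\phi=\phi$; (3) the image $\mathrm{Im}\,\mathcal{T}=\{\mathcal{T}\phi:\phi\in\mathrm{Cvx}(\mathbb{R}^n)\}$ is closed under pointwise addition, in the sense that whenever $\phi',\psi'\in\mathrm{Im}\,\mathcal{T}$ and $\phi'+\psi'$ is finite at some point, then $\phi'+\psi'\in\mathrm{Im}\,\mathcal{T}$. Then there is a constant $C>0$ such that $(\mathcal{T}\phi)(x)=\frac{1}{C}\phi(Cx)$ for all $\phi\in\mathrm{Cvx}(\mathbb{R}^n)$ and all $x\in\mathbb{R}^n$.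
   Context: $\mathrm{Cvx}(\mathbb{R}^n)$ denotes the set of functions $\phi:\mathbb{R}^n\to(-\infty,\infty]$ that are convex, lower semicontinuous, and finite at at least one point. For functions, $\phi\le\psi$ means $\phi(x)\le\psi(x)$ for all $x$. *)

theory Defs
  imports "HOL-Analysis.Analysis" "HOL-Library.Extended_Real"
begin

text \<open>Functions R^n -> (-infinity, +infinity], modelled as ereal-valued functions
  never taking the value -infinity.\<close>

definition ecvx_on :: "('a::real_vector \<Rightarrow> ereal) \<Rightarrow> bool" where
  "ecvx_on \<phi> \<longleftrightarrow> convex {(x, t::real). \<phi> x \<le> ereal t}"

definition elsc :: "('a::topological_space \<Rightarrow> ereal) \<Rightarrow> bool" where
  "elsc \<phi> \<longleftrightarrow> (\<forall>x. \<phi> x \<le> Liminf (at x) \<phi>)"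

definition Cvx :: "('a::real_normed_vector \<Rightarrow> ereal) set" where
  "Cvx = {\<phi>. (\<forall>x. \<phi> x \<noteq> -\<infinity>) \<and> ecvx_on \<phi> \<and> elsc \<phi> \<and> (\<exists>x. \<phi> x \<noteq> \<infinity>)}"

definition pos_homogeneous :: "('a::real_vector \<Rightarrow> ereal) \<Rightarrow> bool" where
  "pos_homogeneous \<phi> \<longleftrightarrow> (\<forall>x. \<forall>c::real. c > 0 \<longrightarrow> \<phi> (c *\<^sub>R x) = ereal c * \<phi> x)"

end

theory Submission
  imports Defs
begin

text \<open>The test functions are the linear forms, which \<open>T\<close> fixes, and the point functions
  \<open>delta_fn p s\<close> (value \<open>s\<close> at \<open>p\<close>, \<open>\<infinity>\<close> elsewhere). Comparing linear minorants shows that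
  \<open>T (delta_fn p s)\<close> is finite only on the ray through \<open>p\<close>, and adding a linear form inside the
  image of \<open>T\<close> gives the shift rule \<open>T (delta_fn p (s + c)) = T (delta_fn p s) + c * coord_along p\<close>
  for \<open>c \<ge> 0\<close>. Hence \<open>T (delta_fn p 0)\<close> is the \<open>{0, \<infinity>}\<close>-indicator of a convex subset of that ray.
  Comparison with the constant \<open>-1\<close>, whose image is a constant \<open>-scale\<close>, puts the far end of this
  subset at \<open>scale *\<^sub>R p\<close>, and the fact that these indicators have disjoint supports for distinct
  \<open>p\<close> shrinks it to that point. So \<open>T (delta_fn a s) = delta_fn (scale *\<^sub>R a) (s * scale)\<close>, and as
  \<open>\<phi> a \<le> s\<close> iff \<open>\<phi> \<le> delta_fn a s\<close>, order preservation gives \<open>T \<phi> (scale *\<^sub>R a) = scale * \<phi> a\<close>.\<close>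

definition delta_fn :: "'a::real_normed_vector \<Rightarrow> real \<Rightarrow> 'a \<Rightarrow> ereal" where
  "delta_fn a s = (\<lambda>x. if x = a then ereal s else \<infinity>)"

definition lin_fn :: "'a::real_inner \<Rightarrow> 'a \<Rightarrow> ereal" where
  "lin_fn y = (\<lambda>x. ereal (inner y x))"

definition const_fn :: "real \<Rightarrow> 'a \<Rightarrow> ereal" where
  "const_fn c = (\<lambda>x. ereal c)"

definition coord_along :: "'a::real_inner \<Rightarrow> 'a \<Rightarrow> real" where
  "coord_along p x = inner p x / inner p p"

lemma const_fn_apply [simp]: "const_fn c x = ereal c"
  by (simp add: const_fn_def)

lemma lin_fn_apply [simp]: "lin_fn y x = ereal (inner y x)"
  by (simp add: lin_fn_def)

lemma le_delta_fn_iff: "f \<le> delta_fn a s \<longleftrightarrow> f a \<le> ereal s"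
  by (auto simp: le_fun_def delta_fn_def)

lemma coord_along_scaleR_self: "p \<noteq> 0 \<Longrightarrow> coord_along p (t *\<^sub>R p) = t"
  by (simp add: coord_along_def)

lemma lin_fn_scaled_apply: "lin_fn ((c / inner p p) *\<^sub>R p) x = ereal (c * coord_along p x)"
  by (simp add: coord_along_def)

lemma Cvx_not_MInfty: "\<phi> \<in> Cvx \<Longrightarrow> \<phi> x \<noteq> -\<infinity>"
  by (auto simp: Cvx_def)

lemma Cvx_finite_somewhere: "\<phi> \<in> Cvx \<Longrightarrow> \<exists>x. \<phi> x \<noteq> \<infinity>"
  by (auto simp: Cvx_def)

lemma Cvx_finite_value:
  assumes "\<phi> \<in> Cvx" "\<phi> x \<noteq> \<infinity>"
  obtains v where "\<phi> x = ereal v"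
  using assms Cvx_not_MInfty by (cases "\<phi> x") auto

lemma Cvx_convex_ineq:
  assumes "\<phi> \<in> Cvx" "\<phi> x \<le> ereal a" "\<phi> y \<le> ereal b" "0 \<le> u" "u \<le> 1"
  shows "\<phi> ((1 - u) *\<^sub>R x + u *\<^sub>R y) \<le> ereal ((1 - u) * a + u * b)"
proof -
  have c: "convex {(x, t::real). \<phi> x \<le> ereal t}"
    using assms(1) by (simp add: Cvx_def ecvx_on_def)
  have "(1 - u) *\<^sub>R (x, a) + u *\<^sub>R (y, b) \<in> {(x, t::real). \<phi> x \<le> ereal t}"
    using assms by (intro convexD[OF c]) auto
  thus ?thesis by simp
qed

lemma elsc_if_continuous:
  assumes "\<And>x. (f \<longlongrightarrow> f x) (at x)"
  shows "elsc f"
  unfolding elsc_def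
proof
  fix x show "f x \<le> Liminf (at x) f"
    using assms[of x] by (cases "at x = bot") (simp_all add: lim_imp_Liminf)
qed

lemma delta_fn_in_Cvx: "delta_fn a s \<in> Cvx"
proof -
  have "{(x, t::real). delta_fn a s x \<le> ereal t} = {a} \<times> {s..}"
    by (auto simp: delta_fn_def split: if_splits)
  hence cv: "ecvx_on (delta_fn a s)" unfolding ecvx_on_def by (simp add: convex_Times)
  have ls: "elsc (delta_fn a s)" unfolding elsc_def
  proof
    fix x :: 'a
    have "\<forall>\<^sub>F y in at x. y \<noteq> a"
    proof (cases "x = a")
      case True then show ?thesis by (simp add: eventually_at_filter)
    next
      case False
      have "\<forall>\<^sub>F y in nhds x. y \<in> - {a}" using False
        by (intro eventually_nhds_in_open) auto
      then show ?thesis unfolding eventually_at_filter by (auto elim: eventually_mono)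
    qed
    hence "\<forall>\<^sub>F y in at x. delta_fn a s y = \<infinity>" by (auto simp: delta_fn_def elim: eventually_mono)
    hence "Liminf (at x) (delta_fn a s) = \<infinity>"
      by (simp add: le_Liminf_iff order_antisym_conv[symmetric] eventually_mono)
    thus "delta_fn a s x \<le> Liminf (at x) (delta_fn a s)" by simp
  qed
  show ?thesis unfolding Cvx_def using cv ls by (auto simp: delta_fn_def intro: exI[of _ a])
qed

lemma lin_fn_in_Cvx: "lin_fn y \<in> Cvx"
proof -
  have "convex {(x, t::real). inner y x \<le> t}"
    unfolding convex_def
  proof clarsimp
    fix x t x' t' and u v :: real
    assume "inner y x \<le> t" "inner y x' \<le> t'" "0 \<le> u" "0 \<le> v" "u + v = 1"
    thus "inner y (u *\<^sub>R x + v *\<^sub>R x') \<le> u * t + v * t'"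
      by (simp add: inner_add_right add_mono mult_left_mono)
  qed
  hence cv: "ecvx_on (lin_fn y)" unfolding ecvx_on_def by simp
  have ls: "elsc (lin_fn y)"
    unfolding lin_fn_def by (intro elsc_if_continuous tendsto_ereal tendsto_intros)
  show ?thesis unfolding Cvx_def using cv ls by auto
qed

lemma pos_homogeneous_lin_fn: "pos_homogeneous (lin_fn y)"
  unfolding pos_homogeneous_def by simp

lemma const_fn_in_Cvx: "(const_fn c :: 'a::real_normed_vector \<Rightarrow> ereal) \<in> Cvx"
proof -
  have "{(x::'a, t::real). const_fn c x \<le> ereal t} = UNIV \<times> {c..}"
    by auto
  hence cv: "ecvx_on (const_fn c :: 'a \<Rightarrow> ereal)" unfolding ecvx_on_def by (simp add: convex_Times)
  have ls: "elsc (const_fn c :: 'a \<Rightarrow> ereal)"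
    unfolding const_fn_def by (intro elsc_if_continuous tendsto_const)
  show ?thesis unfolding Cvx_def using cv ls by auto
qed

lemma const_fn_zero_eq_lin_fn_zero: "const_fn 0 = lin_fn 0"
  by (simp add: fun_eq_iff zero_ereal_def)

lemma Cvx_bounded_above_imp_const:
  assumes phi: "\<phi> \<in> Cvx" and bound: "\<And>x. \<phi> x \<le> ereal B"
  shows "\<exists>K. \<phi> = const_fn K"
proof -
  have fin: "\<phi> x = ereal (real_of_ereal (\<phi> x))" for x
    using Cvx_not_MInfty[OF phi, of x] bound[of x] by (cases "\<phi> x") auto
  define f where "f x = real_of_ereal (\<phi> x)" for x
  have fB: "f x \<le> B" for x using bound[of x] fin[of x] by (metis f_def ereal_less_eq(3))
  have "f y \<le> f x" for x y
  proof (rule ccontr)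
    assume "\<not> f y \<le> f x"
    hence d: "f y - f x > 0" by simp
    define u where "u = min 1 ((f y - f x) / (2 * (B - f x) + 1))"
    have u: "0 < u" "u \<le> 1" using d fB[of x] by (auto simp: u_def)
    define z where "z = x + (1 / u) *\<^sub>R (y - x)"
    have "(1 - u) *\<^sub>R x + u *\<^sub>R z = y" using u by (simp add: z_def algebra_simps)
    hence "\<phi> y \<le> ereal ((1 - u) * f x + u * f z)"
      using Cvx_convex_ineq[OF phi, of x "f x" z "f z" u] fin u by (simp add: f_def)
    hence "f y \<le> (1 - u) * f x + u * f z" using fin[of y] unfolding f_def by (metis ereal_less_eq(3))
    also have "\<dots> \<le> f x + u * (B - f x)" using fB[of z] u by (simp add: algebra_simps)
    finally have "f y - f x \<le> u * (B - f x)" by simp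
    also have "\<dots> \<le> (f y - f x) / (2 * (B - f x) + 1) * (B - f x)"
      using fB[of x] by (intro mult_right_mono) (auto simp: u_def)
    also have "\<dots> < f y - f x"
    proof -
      have "(f y - f x) * (B - f x) < (f y - f x) * (2 * (B - f x) + 1)"
        using d fB[of x] by (intro mult_strict_left_mono) auto
      thus ?thesis using fB[of x] by (simp add: field_simps)
    qed
    finally show False by simp
  qed
  hence "\<phi> = const_fn (f 0)" unfolding fun_eq_iff f_def by (metis fin order_antisym const_fn_apply)
  thus ?thesis by blast
qed

lemma Cvx_above_delta_fn:
  assumes "\<psi> \<in> Cvx" "delta_fn a s \<le> \<psi>"
  obtains s' where "\<psi> = delta_fn a s'" "s \<le> s'"
proof -
  have inf: "\<psi> x = \<infinity>" if "x \<noteq> a" for x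
    using assms(2) that by (auto simp: le_fun_def delta_fn_def dest!: spec[of _ x])
  obtain x where "\<psi> x \<noteq> \<infinity>" using Cvx_finite_somewhere[OF assms(1)] by blast
  with inf have "\<psi> a \<noteq> \<infinity>" by metis
  then obtain v where v: "\<psi> a = ereal v" using Cvx_finite_value[OF assms(1)] by blast
  have "ereal s \<le> \<psi> a" using assms(2) by (auto simp: le_fun_def delta_fn_def dest!: spec[of _ a])
  hence "s \<le> v" using v by simp
  moreover have "\<psi> = delta_fn a v" using inf v by (auto simp: delta_fn_def fun_eq_iff)
  ultimately show ?thesis using that by blast
qed

lemma nonpos_if_linear_bounded_above:
  fixes a v R0 :: real
  assumes "\<And>R. R0 \<le> R \<Longrightarrow> a * R \<le> v"
  shows "a \<le> 0"
proof (rule ccontr)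
  assume "\<not> a \<le> 0"
  hence a: "a > 0" by simp
  have "v + 1 = a * ((v + 1) / a)" using a by simp
  also have "\<dots> \<le> a * max R0 ((v + 1) / a)" using a by (intro mult_left_mono) auto
  also have "\<dots> \<le> v" by (rule assms) simp
  finally show False by simp
qed

lemma halfspace_bounded_inner_imp_ray:
  fixes p x :: "'a::real_inner"
  assumes p: "p \<noteq> 0" and bound: "\<And>y. inner y p \<le> s \<Longrightarrow> inner y x \<le> v"
  shows "x = coord_along p x *\<^sub>R p" "0 \<le> coord_along p x"
proof -
  define \<alpha> where "\<alpha> = coord_along p x"
  define z where "z = x - \<alpha> *\<^sub>R p"
  have pp: "inner p p > 0" using p by simp
  have px: "inner p x = \<alpha> * inner p p" using pp by (simp add: \<alpha>_def coord_along_def)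
  have zp: "inner z p = 0"
    using px by (simp add: z_def inner_diff_right inner_commute)
  have "inner z z \<le> 0"
  proof (rule nonpos_if_linear_bounded_above)
    fix R :: real
    define y where "y = (s / inner p p) *\<^sub>R p + R *\<^sub>R z"
    have zx: "inner z x = inner z z"
      using zp by (simp add: z_def inner_diff_right inner_commute)
    have "inner y p = s" using pp zp by (simp add: y_def inner_add_left)
    hence "inner y x \<le> v" by (intro bound) simp
    moreover have "inner y x = s * \<alpha> + R * inner z z"
      using pp by (simp add: y_def inner_add_left px zx)
    ultimately show "inner z z * R \<le> v - s * \<alpha>" by (simp add: mult.commute)
  qed
  hence "z = 0" by (metis inner_eq_zero_iff inner_ge_zero order_antisym)
  hence x: "x = \<alpha> *\<^sub>R p" by (simp add: z_def)
  have "- \<alpha> \<le> 0"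
  proof (rule nonpos_if_linear_bounded_above)
    fix R :: real assume "- s \<le> R"
    hence "inner ((- R / inner p p) *\<^sub>R p) x \<le> v" using pp by (intro bound) simp
    moreover have "inner ((- R / inner p p) *\<^sub>R p) x = - \<alpha> * R" using pp unfolding x by simp
    ultimately show "- \<alpha> * R \<le> v" by simp
  qed
  thus "x = coord_along p x *\<^sub>R p" "0 \<le> coord_along p x" unfolding \<alpha>_def[symmetric] using x by auto
qed

lemma ereal_le_plus_ereal_iff: "g \<noteq> -\<infinity> \<Longrightarrow> ereal a \<le> g + ereal b \<longleftrightarrow> ereal (a - b) \<le> g"
  by (cases g) auto

lemma Cvx_const_off_origin_imp_const:
  fixes \<phi> :: "'a::euclidean_space \<Rightarrow> ereal"
  assumes phi: "\<phi> \<in> Cvx" and off: "\<And>y. y \<noteq> 0 \<Longrightarrow> \<phi> y = ereal c"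
  shows "\<phi> = const_fn c"
proof
  fix x
  obtain e :: 'a where "e \<in> Basis" using nonempty_Basis by blast
  hence e: "e \<noteq> 0" by (rule nonzero_Basis)
  have "\<phi> ((1 - 1/2) *\<^sub>R e + (1/2) *\<^sub>R (- e)) \<le> ereal ((1 - 1/2) * c + (1/2) * c)"
    using e by (intro Cvx_convex_ineq[OF phi]) (auto simp: off)
  hence "\<phi> 0 \<le> ereal c" by (simp add: algebra_simps)
  then obtain a where a: "\<phi> 0 = ereal a" "a \<le> c"
    using Cvx_not_MInfty[OF phi, of 0] by (cases "\<phi> 0") auto
  have "\<phi> ((1 - 1/2) *\<^sub>R 0 + (1/2) *\<^sub>R (2 *\<^sub>R e)) \<le> ereal ((1 - 1/2) * a + (1/2) * c)"
    using e a by (intro Cvx_convex_ineq[OF phi]) (auto simp: off)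
  hence "c \<le> a" using off[OF e] by simp
  thus "\<phi> x = const_fn c x" using a off by (cases "x = 0") auto
qed

locale cvx_order_iso =
  fixes T :: "('a::euclidean_space \<Rightarrow> ereal) \<Rightarrow> ('a \<Rightarrow> ereal)"
  assumes maps: "\<And>\<phi>. \<phi> \<in> Cvx \<Longrightarrow> T \<phi> \<in> Cvx"
    and order_iso: "\<And>\<phi> \<psi>. \<phi> \<in> Cvx \<Longrightarrow> \<psi> \<in> Cvx \<Longrightarrow> (\<phi> \<le> \<psi> \<longleftrightarrow> T \<phi> \<le> T \<psi>)"
    and homog_fixed: "\<And>\<phi>. \<phi> \<in> Cvx \<Longrightarrow> pos_homogeneous \<phi> \<Longrightarrow> T \<phi> = \<phi>"
    and image_add: "\<And>\<phi>' \<psi>'. \<phi>' \<in> T ` Cvx \<Longrightarrow> \<psi>' \<in> T ` Cvx \<Longrightarrow>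
                      (\<exists>x. \<phi>' x + \<psi>' x \<noteq> \<infinity>) \<Longrightarrow> (\<lambda>x. \<phi>' x + \<psi>' x) \<in> T ` Cvx"
begin

lemma T_inj: "\<phi> \<in> Cvx \<Longrightarrow> \<psi> \<in> Cvx \<Longrightarrow> T \<phi> = T \<psi> \<Longrightarrow> \<phi> = \<psi>"
  using order_iso by (metis order_antisym order_refl)

lemma T_lin_fn [simp]: "T (lin_fn y) = lin_fn y"
  using homog_fixed lin_fn_in_Cvx pos_homogeneous_lin_fn by blast

lemma T_const_fn_zero: "T (const_fn 0) = const_fn 0"
  by (simp add: const_fn_zero_eq_lin_fn_zero)

lemma T_delta_fn_in_Cvx: "T (delta_fn p s) \<in> Cvx"
  using maps delta_fn_in_Cvx by blast

lemma T_delta_fn_not_MInfty: "T (delta_fn p s) x \<noteq> -\<infinity>"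
  using Cvx_not_MInfty[OF T_delta_fn_in_Cvx] .

lemma sum_in_T_image:
  assumes "\<phi> \<in> Cvx" "\<psi> \<in> Cvx" "T \<phi> x \<noteq> \<infinity>" "T \<psi> x \<noteq> \<infinity>"
  shows "(\<lambda>x. T \<phi> x + T \<psi> x) \<in> T ` Cvx"
  using assms by (intro image_add) (auto intro!: exI[of _ x])

lemma T_image_above_T_delta_fn:
  assumes "\<psi>' \<in> T ` Cvx" "T (delta_fn p s) \<le> \<psi>'"
  obtains s' where "\<psi>' = T (delta_fn p s')" "s \<le> s'"
proof -
  obtain \<psi> where psi: "\<psi> \<in> Cvx" "\<psi>' = T \<psi>" using assms(1) by blast
  hence "delta_fn p s \<le> \<psi>" using assms(2) order_iso[OF delta_fn_in_Cvx] by blast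
  with psi that show ?thesis by (metis Cvx_above_delta_fn)
qed

lemma lin_fn_le_T_delta_fn_iff: "lin_fn y \<le> T (delta_fn p s) \<longleftrightarrow> inner y p \<le> s"
proof -
  have "lin_fn y \<le> T (delta_fn p s) \<longleftrightarrow> lin_fn y \<le> delta_fn p s"
    using order_iso[OF lin_fn_in_Cvx delta_fn_in_Cvx] by simp
  thus ?thesis by (simp add: le_delta_fn_iff)
qed

lemma T_delta_fn_finite_imp_ray:
  assumes p: "p \<noteq> 0" and fin: "T (delta_fn p s) x \<noteq> \<infinity>"
  shows "x = coord_along p x *\<^sub>R p" "0 \<le> coord_along p x"
proof -
  obtain v where v: "T (delta_fn p s) x = ereal v"
    using Cvx_finite_value[OF T_delta_fn_in_Cvx fin] .
  have "inner y x \<le> v" if "inner y p \<le> s" for y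
    using that v lin_fn_le_T_delta_fn_iff[of y p s] by (auto simp: le_fun_def dest!: spec[of _ x])
  with halfspace_bounded_inner_imp_ray[OF p]
  show "x = coord_along p x *\<^sub>R p" "0 \<le> coord_along p x" by blast+
qed

lemma T_delta_fn_shift:
  assumes p: "p \<noteq> 0" and c: "0 \<le> c"
  shows "T (delta_fn p (s + c)) = (\<lambda>x. T (delta_fn p s) x + ereal (c * coord_along p x))"
proof -
  let ?g = "T (delta_fn p s)"
  define w where "w = (c / inner p p) *\<^sub>R p"
  define F where "F = (\<lambda>x. ?g x + lin_fn w x)"
  have F_eq: "F = (\<lambda>x. ?g x + ereal (c * coord_along p x))"
    by (simp add: F_def w_def lin_fn_scaled_apply del: lin_fn_apply)
  obtain x0 where "?g x0 \<noteq> \<infinity>" using Cvx_finite_somewhere[OF T_delta_fn_in_Cvx] by blast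
  hence "F \<in> T ` Cvx"
    unfolding F_def using sum_in_T_image[OF delta_fn_in_Cvx lin_fn_in_Cvx] by simp
  moreover have "?g \<le> F"
  proof (rule le_funI)
    fix x
    show "?g x \<le> F x"
    proof (cases "?g x = \<infinity>")
      case True thus ?thesis by (simp add: F_def)
    next
      case False
      hence "0 \<le> c * coord_along p x" using T_delta_fn_finite_imp_ray(2)[OF p] c by simp
      thus ?thesis unfolding F_eq by (simp add: add_increasing2)
    qed
  qed
  ultimately obtain s' where s': "F = T (delta_fn p s')" by (rule T_image_above_T_delta_fn)
  have pp: "inner p p > 0" using p by simp
  have minorants: "inner y p \<le> s' \<longleftrightarrow> inner y p \<le> s + c" for y
  proof -
    have "inner y p \<le> s' \<longleftrightarrow> lin_fn y \<le> F" using lin_fn_le_T_delta_fn_iff s' by simp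
    also have "\<dots> \<longleftrightarrow> lin_fn (y - w) \<le> ?g"
      unfolding F_def le_fun_def
      by (simp add: ereal_le_plus_ereal_iff T_delta_fn_not_MInfty inner_diff_left)
    also have "\<dots> \<longleftrightarrow> inner (y - w) p \<le> s" by (rule lin_fn_le_T_delta_fn_iff)
    also have "\<dots> \<longleftrightarrow> inner y p \<le> s + c" using pp by (simp add: w_def inner_diff_left) arith
    finally show ?thesis .
  qed
  have "inner ((t / inner p p) *\<^sub>R p) p = t" for t using pp by simp
  hence "s' = s + c"
    using minorants[of "(s' / inner p p) *\<^sub>R p"] minorants[of "((s + c) / inner p p) *\<^sub>R p"] by simp
  thus ?thesis using s' F_eq by simp
qed

lemma T_delta_fn_zero_nonneg: "0 \<le> T (delta_fn p 0) x"
proof -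
  have "lin_fn 0 \<le> T (delta_fn p 0)" by (simp add: lin_fn_le_T_delta_fn_iff)
  thus ?thesis by (auto simp: le_fun_def zero_ereal_def dest!: spec[of _ x])
qed

text \<open>Doubling \<open>T (delta_fn p 0)\<close> stays in the image of \<open>T\<close>, so by the shift rule it adds a linear
  term \<open>s' * coord_along p\<close>; comparing linear minorants forces \<open>s' = 0\<close>.\<close>

lemma T_delta_fn_zero_finite_imp_zero:
  assumes p: "p \<noteq> 0" and fin: "T (delta_fn p 0) x \<noteq> \<infinity>"
  shows "T (delta_fn p 0) x = 0"
proof -
  let ?G = "T (delta_fn p 0)"
  have "(\<lambda>x. ?G x + ?G x) \<in> T ` Cvx" using sum_in_T_image[OF delta_fn_in_Cvx delta_fn_in_Cvx fin fin] .
  moreover have "?G \<le> (\<lambda>x. ?G x + ?G x)"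
    by (rule le_funI) (simp add: T_delta_fn_zero_nonneg add_increasing2)
  ultimately obtain s' where s': "(\<lambda>x. ?G x + ?G x) = T (delta_fn p s')" "0 \<le> s'"
    by (rule T_image_above_T_delta_fn)
  have eq: "?G y + ?G y = ?G y + ereal (s' * coord_along p y)" for y
    using T_delta_fn_shift[OF p s'(2), of 0] s'(1) by (metis add_0)
  have G_fin: "?G y = ereal (s' * coord_along p y)" if fin_y: "?G y \<noteq> \<infinity>" for y
  proof -
    obtain v where "?G y = ereal v" using Cvx_finite_value[OF T_delta_fn_in_Cvx fin_y] .
    with eq[of y] show ?thesis by simp
  qed
  have "s' = 0"
  proof (rule ccontr)
    assume "s' \<noteq> 0"
    hence sp: "s' > 0" using s' by simp
    have pp: "inner p p > 0" using p by simp
    define y where "y = ((s' / 2) / inner p p) *\<^sub>R p"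
    have "\<not> lin_fn y \<le> ?G" unfolding lin_fn_le_T_delta_fn_iff using pp sp by (simp add: y_def)
    then obtain z where z: "?G z < lin_fn y z" by (auto simp: le_fun_def not_le)
    have ly: "lin_fn y z = ereal (s' / 2 * coord_along p z)"
      unfolding y_def by (rule lin_fn_scaled_apply)
    hence "?G z \<noteq> \<infinity>" using z by auto
    hence "?G z = ereal (s' * coord_along p z)" by (rule G_fin)
    moreover from this have "0 \<le> s' * coord_along p z" using T_delta_fn_zero_nonneg[of p z] by simp
    ultimately show False using z ly by simp
  qed
  thus ?thesis using G_fin[OF fin] by simp
qed

lemma T_delta_fn_eq:
  assumes p: "p \<noteq> 0"
  shows "T (delta_fn p s) x = (if T (delta_fn p 0) x = 0 then ereal (s * coord_along p x) else \<infinity>)"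
proof (cases "0 \<le> s")
  case True
  have "T (delta_fn p s) x = T (delta_fn p 0) x + ereal (s * coord_along p x)"
    using T_delta_fn_shift[OF p True, of 0] by simp
  thus ?thesis using T_delta_fn_zero_finite_imp_zero[OF p, of x] by auto
next
  case False
  have "T (delta_fn p 0) x = T (delta_fn p s) x + ereal (- s * coord_along p x)"
    using T_delta_fn_shift[OF p, of "- s" s] False by simp
  thus ?thesis using T_delta_fn_zero_finite_imp_zero[OF p, of x] T_delta_fn_not_MInfty[of p s x]
    by (cases "T (delta_fn p s) x"; cases "T (delta_fn p 0) x = 0") auto
qed

definition scale :: real where
  "scale = - real_of_ereal (T (const_fn (-1)) 0)"

lemma T_const_fn_neg_one: "T (const_fn (-1)) = const_fn (- scale)"
proof -
  have "const_fn (-1) \<le> (const_fn 0 :: 'a \<Rightarrow> ereal)" by (simp add: le_fun_def)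
  hence "T (const_fn (-1)) \<le> const_fn 0"
    using order_iso[OF const_fn_in_Cvx const_fn_in_Cvx] T_const_fn_zero by metis
  hence "T (const_fn (-1)) x \<le> ereal 0" for x by (simp add: le_fun_def)
  hence "\<exists>K. T (const_fn (-1)) = const_fn K"
    by (rule Cvx_bounded_above_imp_const[OF maps[OF const_fn_in_Cvx]])
  thus ?thesis by (auto simp: scale_def)
qed

lemma coord_along_le_scale:
  assumes p: "p \<noteq> 0" and zero: "T (delta_fn p 0) x = 0"
  shows "coord_along p x \<le> scale"
proof -
  have "const_fn (-1) \<le> delta_fn p (-1)" by (simp add: le_delta_fn_iff)
  hence "T (const_fn (-1)) \<le> T (delta_fn p (-1))"
    using order_iso[OF const_fn_in_Cvx delta_fn_in_Cvx] by blast
  hence "ereal (- scale) \<le> T (delta_fn p (-1)) x" by (simp add: T_const_fn_neg_one le_fun_def)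
  thus ?thesis using T_delta_fn_eq[OF p, of "-1" x] zero by simp
qed

lemma T_delta_fn_zero_vanishes_beyond:
  assumes p: "p \<noteq> 0" and \<sigma>: "\<sigma> < -1"
  obtains x where "T (delta_fn p 0) x = 0" "\<sigma> * coord_along p x < - scale"
proof -
  have "\<not> const_fn (-1) \<le> delta_fn p \<sigma>" using \<sigma> by (simp add: le_delta_fn_iff)
  hence "\<not> T (const_fn (-1)) \<le> T (delta_fn p \<sigma>)"
    using order_iso[OF const_fn_in_Cvx delta_fn_in_Cvx] by blast
  then obtain x where x: "T (delta_fn p \<sigma>) x < ereal (- scale)"
    by (auto simp: T_const_fn_neg_one le_fun_def not_le)
  hence "T (delta_fn p 0) x = 0" using T_delta_fn_eq[OF p, of \<sigma> x] by (auto split: if_splits)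
  moreover from this have "\<sigma> * coord_along p x < - scale" using x T_delta_fn_eq[OF p, of \<sigma> x] by simp
  ultimately show ?thesis by (rule that)
qed

lemma scale_pos: "0 < scale"
proof -
  obtain e :: 'a where "e \<in> Basis" using nonempty_Basis by blast
  hence e: "e \<noteq> 0" by (rule nonzero_Basis)
  obtain x where x: "T (delta_fn e 0) x = 0" "-2 * coord_along e x < - scale"
    using T_delta_fn_zero_vanishes_beyond[OF e, of "-2"] by auto
  thus ?thesis using coord_along_le_scale[OF e x(1)] by simp
qed

lemma T_delta_fn_zero_vanishes_near_scale:
  assumes p: "p \<noteq> 0" and t: "t < scale"
  obtains t' where "t < t'" "t' \<le> scale" "T (delta_fn p 0) (t' *\<^sub>R p) = 0"
proof -
  define t0 where "t0 = max t (scale / 2)"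
  have t0: "0 < t0" "t0 < scale" using t scale_pos by (auto simp: t0_def)
  obtain x where x: "T (delta_fn p 0) x = 0" "(- scale / t0) * coord_along p x < - scale"
    using T_delta_fn_zero_vanishes_beyond[OF p, of "- scale / t0"] t0 by (auto simp: field_simps)
  have "t0 < coord_along p x"
  proof -
    have "scale * t0 < scale * coord_along p x" using x(2) t0 by (simp add: field_simps)
    thus ?thesis using scale_pos by simp
  qed
  moreover have "x = coord_along p x *\<^sub>R p" using T_delta_fn_finite_imp_ray(1)[OF p, of 0 x] x(1) by simp
  ultimately show ?thesis
    using that[of "coord_along p x"] x(1) coord_along_le_scale[OF p x(1)] by (simp add: t0_def)
qed

lemma T_delta_fn_zero_vanishes_between:
  assumes "T (delta_fn p 0) (t1 *\<^sub>R p) = 0" "T (delta_fn p 0) (t2 *\<^sub>R p) = 0"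
    and "t1 \<le> r" "r \<le> t2"
  shows "T (delta_fn p 0) (r *\<^sub>R p) = 0"
proof (cases "t1 = t2")
  case True thus ?thesis using assms by simp
next
  case False
  define w where "w = (r - t1) / (t2 - t1)"
  have w: "0 \<le> w" "w \<le> 1" using assms False by (auto simp: w_def field_simps)
  have "w * (t2 - t1) = r - t1" using False by (simp add: w_def)
  hence "(1 - w) * t1 + w * t2 = r" by (simp add: algebra_simps)
  hence "(1 - w) *\<^sub>R (t1 *\<^sub>R p) + w *\<^sub>R (t2 *\<^sub>R p) = r *\<^sub>R p"
    by (simp add: scaleR_add_left[symmetric])
  moreover have "T (delta_fn p 0) ((1 - w) *\<^sub>R (t1 *\<^sub>R p) + w *\<^sub>R (t2 *\<^sub>R p)) \<le> ereal ((1 - w) * 0 + w * 0)"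
    using assms w by (intro Cvx_convex_ineq[OF T_delta_fn_in_Cvx]) (auto simp: zero_ereal_def)
  ultimately show ?thesis using T_delta_fn_zero_nonneg[of p] by (simp add: zero_ereal_def order_antisym)
qed

lemma T_delta_fn_zero_finite_disjoint:
  assumes pq: "p \<noteq> q" and fp: "T (delta_fn p 0) x \<noteq> \<infinity>" and fq: "T (delta_fn q 0) x \<noteq> \<infinity>"
  shows False
proof -
  let ?H = "\<lambda>x. T (delta_fn p 0) x + T (delta_fn q 0) x"
  have H: "?H \<in> T ` Cvx" using sum_in_T_image[OF delta_fn_in_Cvx delta_fn_in_Cvx fp fq] .
  have "T (delta_fn p 0) \<le> ?H" by (rule le_funI) (simp add: T_delta_fn_zero_nonneg add_increasing2)
  then obtain s1 where s1: "?H = T (delta_fn p s1)" using T_image_above_T_delta_fn[OF H] by blast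
  have "T (delta_fn q 0) \<le> ?H" by (rule le_funI) (simp add: T_delta_fn_zero_nonneg add_increasing)
  then obtain s2 where s2: "?H = T (delta_fn q s2)" using T_image_above_T_delta_fn[OF H] by blast
  have "delta_fn p s1 = delta_fn q s2" using s1 s2 T_inj[OF delta_fn_in_Cvx delta_fn_in_Cvx] by simp
  hence "ereal s1 = \<infinity>" using pq by (auto simp: delta_fn_def fun_eq_iff dest!: spec[of _ p])
  thus False by simp
qed

text \<open>If \<open>T (delta_fn p 0)\<close> vanished at some \<open>t1 *\<^sub>R p\<close> with \<open>t1 < scale\<close>, it would vanish on a
  segment \<open>[t1, t2] *\<^sub>R p\<close>; for a suitable \<open>\<mu> \<in> (0, 1)\<close> the function \<open>T (delta_fn (\<mu> *\<^sub>R p) 0)\<close>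
  vanishes inside that segment too, contradicting disjointness.\<close>

lemma scale_le_coord_along:
  assumes p: "p \<noteq> 0" and zero: "T (delta_fn p 0) x = 0"
  shows "scale \<le> coord_along p x"
proof (rule ccontr)
  define t1 where "t1 = coord_along p x"
  assume "\<not> scale \<le> coord_along p x"
  hence t1: "t1 < scale" by (simp add: t1_def)
  have x: "x = t1 *\<^sub>R p" "0 \<le> t1"
    using T_delta_fn_finite_imp_ray[OF p, of 0 x] zero by (auto simp: t1_def)
  obtain t2 where t2: "t1 < t2" "t2 \<le> scale" "T (delta_fn p 0) (t2 *\<^sub>R p) = 0"
    using T_delta_fn_zero_vanishes_near_scale[OF p t1] .
  define \<mu> where "\<mu> = (t1 + t2) / (2 * scale)"
  have \<mu>_scale: "\<mu> * scale = (t1 + t2) / 2" using scale_pos by (simp add: \<mu>_def)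
  have \<mu>: "0 < \<mu>" "\<mu> < 1"
    using scale_pos t2 x(2) by (auto simp: \<mu>_def field_simps)
  define q where "q = \<mu> *\<^sub>R p"
  have q: "q \<noteq> 0" "q \<noteq> p" using p \<mu> by (auto simp: q_def scaleR_cancel_right[of \<mu> p 1, simplified])
  have "t1 / \<mu> < scale" using \<mu> \<mu>_scale t2(1) by (simp add: field_simps)
  then obtain s where s: "t1 / \<mu> < s" "s \<le> scale" "T (delta_fn q 0) (s *\<^sub>R q) = 0"
    by (rule T_delta_fn_zero_vanishes_near_scale[OF q(1)])
  define r where "r = s * \<mu>"
  have "t1 < r" using s(1) \<mu> by (simp add: r_def field_simps)
  moreover have "r \<le> \<mu> * scale" using s(2) \<mu> by (simp add: r_def mult.commute mult_left_mono)
  hence "r \<le> t2" using \<mu>_scale t2(1) by simp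
  ultimately have "T (delta_fn p 0) (r *\<^sub>R p) = 0"
    using T_delta_fn_zero_vanishes_between[of p t1 t2 r] zero x(1) t2(3) by simp
  moreover have "s *\<^sub>R q = r *\<^sub>R p" by (simp add: q_def r_def)
  ultimately show False using T_delta_fn_zero_finite_disjoint[OF q(2)[symmetric], of "r *\<^sub>R p"] s(3) by simp
qed

lemma T_delta_fn_zero_eq_zero_iff:
  assumes p: "p \<noteq> 0"
  shows "T (delta_fn p 0) x = 0 \<longleftrightarrow> x = scale *\<^sub>R p"
proof -
  have zero_at: "y = scale *\<^sub>R p" if "T (delta_fn p 0) y = 0" for y
    using coord_along_le_scale[OF p that] scale_le_coord_along[OF p that]
      T_delta_fn_finite_imp_ray(1)[OF p, of 0 y] that by simp
  obtain z where "T (delta_fn p 0) z \<noteq> \<infinity>" using Cvx_finite_somewhere[OF T_delta_fn_in_Cvx] by blast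
  hence "T (delta_fn p 0) z = 0" by (rule T_delta_fn_zero_finite_imp_zero[OF p])
  with zero_at show ?thesis by metis
qed

lemma T_delta_fn_nonzero:
  assumes p: "p \<noteq> 0"
  shows "T (delta_fn p s) = delta_fn (scale *\<^sub>R p) (s * scale)"
proof
  fix x
  show "T (delta_fn p s) x = delta_fn (scale *\<^sub>R p) (s * scale) x"
    using T_delta_fn_eq[OF p, of s x] T_delta_fn_zero_eq_zero_iff[OF p, of x] p
    by (auto simp: delta_fn_def coord_along_scaleR_self)
qed

lemma T_apply_scaleR:
  assumes T_delta: "\<And>s. T (delta_fn a s) = delta_fn (scale *\<^sub>R a) (s * scale)" and phi: "\<phi> \<in> Cvx"
  shows "T \<phi> (scale *\<^sub>R a) = ereal scale * \<phi> a"
proof (rule antisym)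
  show "T \<phi> (scale *\<^sub>R a) \<le> ereal scale * \<phi> a"
  proof (cases "\<phi> a = \<infinity>")
    case True thus ?thesis using scale_pos by simp
  next
    case False
    then obtain v where v: "\<phi> a = ereal v" using Cvx_finite_value[OF phi] by blast
    hence "\<phi> \<le> delta_fn a v" by (simp add: le_delta_fn_iff)
    hence "T \<phi> \<le> T (delta_fn a v)" using order_iso[OF phi delta_fn_in_Cvx] by blast
    thus ?thesis using v by (simp add: T_delta le_delta_fn_iff mult.commute)
  qed
  show "ereal scale * \<phi> a \<le> T \<phi> (scale *\<^sub>R a)"
  proof (cases "T \<phi> (scale *\<^sub>R a) = \<infinity>")
    case True thus ?thesis by simp
  next
    case False
    then obtain w where w: "T \<phi> (scale *\<^sub>R a) = ereal w" using Cvx_finite_value[OF maps[OF phi]] by blast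
    hence "T \<phi> \<le> delta_fn (scale *\<^sub>R a) ((w / scale) * scale)"
      using scale_pos by (simp add: le_delta_fn_iff)
    hence "\<phi> \<le> delta_fn a (w / scale)" using order_iso[OF phi delta_fn_in_Cvx] T_delta by metis
    hence "\<phi> a \<le> ereal (w / scale)" by (simp add: le_delta_fn_iff)
    hence "ereal scale * \<phi> a \<le> ereal scale * ereal (w / scale)"
      using scale_pos by (intro ereal_mult_left_mono) auto
    thus ?thesis using w scale_pos by simp
  qed
qed

lemma T_apply_nonzero:
  assumes "x \<noteq> 0" "\<phi> \<in> Cvx"
  shows "T \<phi> x = ereal scale * \<phi> ((1 / scale) *\<^sub>R x)"
proof -
  have "(1 / scale) *\<^sub>R x \<noteq> 0" using assms scale_pos by simp
  from T_apply_scaleR[OF T_delta_fn_nonzero[OF this] assms(2)] show ?thesis using scale_pos by simp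
qed

lemma T_const_fn: "T (const_fn c) = const_fn (scale * c)"
  using T_apply_nonzero[OF _ const_fn_in_Cvx]
  by (intro Cvx_const_off_origin_imp_const[OF maps[OF const_fn_in_Cvx]]) simp

lemma T_delta_fn_origin: "T (delta_fn 0 s) = delta_fn 0 (s * scale)"
proof -
  let ?f = "T (delta_fn 0 s)"
  have off: "?f y = \<infinity>" if y: "y \<noteq> 0" for y
  proof (rule ccontr)
    assume "?f y \<noteq> \<infinity>"
    then obtain v where v: "?f y = ereal v" using Cvx_finite_value[OF T_delta_fn_in_Cvx] by blast
    have y': "(1 / scale) *\<^sub>R y \<noteq> 0" using y scale_pos by simp
    have "?f \<le> delta_fn y v" using v by (simp add: le_delta_fn_iff)
    also have "delta_fn y v = T (delta_fn ((1 / scale) *\<^sub>R y) (v / scale))"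
      using T_delta_fn_nonzero[OF y'] scale_pos by simp
    finally have "delta_fn 0 s \<le> delta_fn ((1 / scale) *\<^sub>R y) (v / scale)"
      using order_iso[OF delta_fn_in_Cvx delta_fn_in_Cvx] by blast
    thus False using y' unfolding le_delta_fn_iff by (simp add: delta_fn_def)
  qed
  obtain z where "?f z \<noteq> \<infinity>" using Cvx_finite_somewhere[OF T_delta_fn_in_Cvx] by blast
  with off have "?f 0 \<noteq> \<infinity>" by metis
  then obtain r where r: "?f 0 = ereal r" using Cvx_finite_value[OF T_delta_fn_in_Cvx] by blast
  have consts_below: "c \<le> s \<longleftrightarrow> scale * c \<le> r" for c
  proof -
    have "c \<le> s \<longleftrightarrow> const_fn c \<le> delta_fn (0::'a) s" by (simp add: le_delta_fn_iff)
    also have "\<dots> \<longleftrightarrow> T (const_fn c) \<le> ?f" using order_iso[OF const_fn_in_Cvx delta_fn_in_Cvx] by blast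
    also have "\<dots> \<longleftrightarrow> scale * c \<le> r"
      unfolding T_const_fn le_fun_def using off r by (metis const_fn_apply ereal_less_eq(1) ereal_less_eq(3))
    finally show ?thesis .
  qed
  have "r = s * scale"
    using consts_below[of s] consts_below[of "r / scale"] scale_pos by (simp add: field_simps)
  thus ?thesis using off r by (auto simp: delta_fn_def fun_eq_iff)
qed

lemma T_delta_fn: "T (delta_fn a s) = delta_fn (scale *\<^sub>R a) (s * scale)"
  using T_delta_fn_origin T_delta_fn_nonzero by (cases "a = 0") auto

lemma T_eq_rescaled: "\<phi> \<in> Cvx \<Longrightarrow> T \<phi> x = ereal scale * \<phi> ((1 / scale) *\<^sub>R x)"
  using T_apply_scaleR[OF T_delta_fn, of \<phi> "(1 / scale) *\<^sub>R x"] scale_pos by simp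

end

theorem theorem1p4:
  fixes T :: "(real ^ 'n \<Rightarrow> ereal) \<Rightarrow> (real ^ 'n \<Rightarrow> ereal)"
  assumes maps: "\<And>\<phi>. \<phi> \<in> Cvx \<Longrightarrow> T \<phi> \<in> Cvx"
    and order_iso: "\<And>\<phi> \<psi>. \<phi> \<in> Cvx \<Longrightarrow> \<psi> \<in> Cvx \<Longrightarrow> (\<phi> \<le> \<psi> \<longleftrightarrow> T \<phi> \<le> T \<psi>)"
    and homog_fixed: "\<And>\<phi>. \<phi> \<in> Cvx \<Longrightarrow> pos_homogeneous \<phi> \<Longrightarrow> T \<phi> = \<phi>"
    and image_add: "\<And>\<phi>' \<psi>'. \<phi>' \<in> T ` Cvx \<Longrightarrow> \<psi>' \<in> T ` Cvx \<Longrightarrow>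
                      (\<exists>x. \<phi>' x + \<psi>' x \<noteq> \<infinity>) \<Longrightarrow> (\<lambda>x. \<phi>' x + \<psi>' x) \<in> T ` Cvx"
  shows "\<exists>C::real. C > 0 \<and>
           (\<forall>\<phi>\<in>Cvx. \<forall>x. T \<phi> x = ereal (1 / C) * \<phi> (C *\<^sub>R x))"
proof -
  interpret cvx_order_iso T
    using maps order_iso homog_fixed image_add by unfold_locales
  show ?thesis
    using scale_pos T_eq_rescaled by (intro exI[of _ "1 / scale"]) simp
qed

end
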